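(* Let $d\ge 1$, let $\Delta$ be a simplicial complex containing a $d$-dimensional cycle $\Omega$ whose $d$-faces are $F_1,\ldots,F_k$. Suppose there exist distinct $(d+1)$-faces $A_1,\ldots,A_\ell$ of the induced subcomplex $\Delta_{V(\Omega)}$ such that, over $\mathbb{Z}_2$, $$\partial_{d+1}\Big(\sum_{i=1}^\ell A_i\Big)=\sum_{j=1}^k F_j, \qquad ( * )$$ and no proper subset of $\{A_1,\ldots,A_\ell\}$ satisfies $( * )$. Then for any vertex $v\notin V(\Omega)$, the simplicial complex $\Phi=\langle F_1\cup\{v\},\ldots,F_k\cup\{v\},A_1,\ldots,A_\ell\rangle$ is a $(d+1)$-dimensional cycle.
   Context: A simplicial complex is a family of subsets (faces) of a finite vertex set closed under taking subsets; the dimension of a face $S$ is $|S|-1$, a $d$-face is a face of dimension $d$, facets are maximal faces, and $\langle G_1,\ldots,G_m\rangle$ denotes the simplicial complex whose facets are $G_1,\ldots,G_m$. $V(\Omega)$ is the vertex set of $\Omega$; for $W\subseteq V(\Delta)$, the induced subcomplex $\Delta_W$ consists of the faces of $\Delta$ contained in $W$. Over $\mathbb{Z}_2$, $C_d$ is the vector space with basis the $d$-faces and $\partial_d(F)$ is the sum of the $(d-1)$-faces contained in $F$. A complex is pure if all facets have the same dimension. A sequence $G_1,\ldots,G_m$ of $d$-faces is a $d$-path if $|G_i\cap G_{i+1}|=d$ for $1\le i\le m-1$. A pure $d$-dimensional complex is $d$-path-connected if every pair of its $d$-faces is joined by a $d$-path; its $d$-path-connected components are its maximal $d$-path-connected subcomplexes.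 A $d$-dimensional cycle is a pure $d$-dimensional simplicial complex $\Omega$ that is $d$-path-connected and in which every $(d-1)$-face of $\Omega$ is contained in an even number of $d$-faces of $\Omega$. *)

theory Defs
  imports Main
begin

definition simplicial_complex :: "'a set set \<Rightarrow> bool" where
  "simplicial_complex \<Delta> \<longleftrightarrow> finite \<Delta> \<and> (\<forall>S\<in>\<Delta>. finite S) \<and> (\<forall>S\<in>\<Delta>. \<forall>T. T \<subseteq> S \<longrightarrow> T \<in> \<Delta>)"

definition vertices :: "'a set set \<Rightarrow> 'a set" where
  "vertices \<Omega> = \<Union>\<Omega>"

definition faces_dim :: "'a set set \<Rightarrow> nat \<Rightarrow> 'a set set" where
  "faces_dim \<Delta> d = {S \<in> \<Delta>. card S = d + 1}"

definition facets :: "'a set set \<Rightarrow> 'a set set" where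
  "facets \<Delta> = {S \<in> \<Delta>. \<not> (\<exists>T\<in>\<Delta>. S \<subset> T)}"

definition induced :: "'a set set \<Rightarrow> 'a set \<Rightarrow> 'a set set" where
  "induced \<Delta> W = {S \<in> \<Delta>. S \<subseteq> W}"

definition generated :: "'a set set \<Rightarrow> 'a set set" where
  "generated \<G> = {T. \<exists>G\<in>\<G>. T \<subseteq> G}"

definition pure_dim :: "'a set set \<Rightarrow> nat \<Rightarrow> bool" where
  "pure_dim \<Delta> d \<longleftrightarrow> \<Delta> \<noteq> {} \<and> (\<forall>F\<in>facets \<Delta>. card F = d + 1)"

definition is_d_path :: "'a set set \<Rightarrow> nat \<Rightarrow> 'a set list \<Rightarrow> bool" where
  "is_d_path \<Delta> d ps \<longleftrightarrow> ps \<noteq> [] \<and> set ps \<subseteq> faces_dim \<Delta> d \<and>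
     (\<forall>i. Suc i < length ps \<longrightarrow> card (ps ! i \<inter> ps ! Suc i) = d)"

definition d_path_connected :: "'a set set \<Rightarrow> nat \<Rightarrow> bool" where
  "d_path_connected \<Delta> d \<longleftrightarrow> pure_dim \<Delta> d \<and>
     (\<forall>F\<in>faces_dim \<Delta> d. \<forall>G\<in>faces_dim \<Delta> d.
        \<exists>ps. is_d_path \<Delta> d ps \<and> hd ps = F \<and> last ps = G)"

text \<open>A d-dimensional cycle (d >= 1 in all uses).\<close>
definition is_cycle :: "'a set set \<Rightarrow> nat \<Rightarrow> bool" where
  "is_cycle \<Omega> d \<longleftrightarrow> simplicial_complex \<Omega> \<and> pure_dim \<Omega> d \<and> d_path_connected \<Omega> d \<and>
     (\<forall>\<sigma>\<in>faces_dim \<Omega> (d - 1). even (card {F \<in> faces_dim \<Omega> d. \<sigma> \<subseteq> F}))"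

text \<open>Z_2 chains are represented as finite sets of faces (sum = symmetric difference).\<close>
definition bd_Z2 :: "'a set set \<Rightarrow> 'a set set" where
  "bd_Z2 \<A> = {\<sigma>. odd (card {A \<in> \<A>. \<sigma> \<subseteq> A \<and> card A = Suc (card \<sigma>)})}"

end

theory Submission
  imports Defs
begin

text \<open>
  Every codimension-one face of \<Phi> either contains the apex v, and then its cofaces are the cones
  over the cofaces of a (d-1)-face of \<Omega>, of which there is an even number; or it misses v, and
  then it lies in the cone over itself exactly when it is a d-face of \<Omega>, which by (*) is exactly
  when it lies in an odd number of the A_i. The cones are (d+1)-path-connected because \<Omega> is
  d-path-connected. If some A_i were not reachable from the cones, the unreachable ones would share
  no d-face with the others or with \<Omega>, so discarding them would preserve (*), against minimality.
\<close>

definition d_adjacent :: "'a set set \<Rightarrow> nat \<Rightarrow> 'a set \<Rightarrow> 'a set \<Rightarrow> bool" where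
  "d_adjacent \<Delta> d F G \<longleftrightarrow> F \<in> faces_dim \<Delta> d \<and> G \<in> faces_dim \<Delta> d \<and> card (F \<inter> G) = d"

lemma symp_d_adjacent: "symp (d_adjacent \<Delta> d)"
  by (auto simp: symp_def d_adjacent_def Int_commute)

lemma is_d_path_ConsD:
  assumes "is_d_path \<Delta> d (F # ps)" and "ps \<noteq> []"
  shows "is_d_path \<Delta> d ps" and "d_adjacent \<Delta> d F (hd ps)"
proof -
  have step: "card ((F # ps) ! j \<inter> (F # ps) ! Suc j) = d" if "Suc j < Suc (length ps)" for j
    using assms(1) that unfolding is_d_path_def length_Cons by blast
  show "is_d_path \<Delta> d ps"
    using assms step by (auto simp: is_d_path_def)
  show "d_adjacent \<Delta> d F (hd ps)"
    using assms step[of 0] by (auto simp: is_d_path_def d_adjacent_def hd_conv_nth)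
qed

lemma is_d_path_snoc:
  assumes "is_d_path \<Delta> d ps" and "d_adjacent \<Delta> d (last ps) H"
  shows "is_d_path \<Delta> d (ps @ [H])"
  unfolding is_d_path_def
proof (intro conjI allI impI)
  show "ps @ [H] \<noteq> []" by simp
  show "set (ps @ [H]) \<subseteq> faces_dim \<Delta> d"
    using assms by (auto simp: is_d_path_def d_adjacent_def)
  fix i assume i: "Suc i < length (ps @ [H])"
  have "ps \<noteq> []" using assms(1) by (simp add: is_d_path_def)
  show "card ((ps @ [H]) ! i \<inter> (ps @ [H]) ! Suc i) = d"
  proof (cases "Suc i < length ps")
    case True
    then show ?thesis using assms(1) by (simp add: nth_append is_d_path_def)
  next
    case False
    then have "i = length ps - 1" using i by simp
    then show ?thesis using \<open>ps \<noteq> []\<close> assms(2) False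
      by (simp add: nth_append last_conv_nth d_adjacent_def)
  qed
qed

lemma is_d_path_rtranclp:
  assumes "is_d_path \<Delta> d ps"
  shows "(d_adjacent \<Delta> d)\<^sup>*\<^sup>* (hd ps) (last ps)"
proof -
  have "ps \<noteq> []" using assms by (simp add: is_d_path_def)
  then show ?thesis using assms
  proof (induction ps rule: list_nonempty_induct)
    case (single F)
    then show ?case by simp
  next
    case (cons F ps)
    then show ?case
      using is_d_path_ConsD[OF cons.prems cons.hyps] by (auto intro: converse_rtranclp_into_rtranclp)
  qed
qed

lemma rtranclp_imp_is_d_path:
  assumes "(d_adjacent \<Delta> d)\<^sup>*\<^sup>* F G" and "F \<in> faces_dim \<Delta> d"
  shows "\<exists>ps. is_d_path \<Delta> d ps \<and> hd ps = F \<and> last ps = G"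
  using assms(1)
proof induction
  case base
  show ?case using assms(2) by (intro exI[of _ "[F]"]) (simp add: is_d_path_def)
next
  case (step G H)
  then obtain ps where ps: "is_d_path \<Delta> d ps" "hd ps = F" "last ps = G" by blast
  then have "is_d_path \<Delta> d (ps @ [H])" and "ps \<noteq> []"
    using is_d_path_snoc step.hyps(2) by (auto simp: is_d_path_def)
  then show ?case using ps by (intro exI[of _ "ps @ [H]"]) simp
qed

lemma d_path_connected_iff:
  "d_path_connected \<Delta> d \<longleftrightarrow> pure_dim \<Delta> d \<and>
     (\<forall>F\<in>faces_dim \<Delta> d. \<forall>G\<in>faces_dim \<Delta> d. (d_adjacent \<Delta> d)\<^sup>*\<^sup>* F G)"
proof -
  have "(\<exists>ps. is_d_path \<Delta> d ps \<and> hd ps = F \<and> last ps = G) \<longleftrightarrow> (d_adjacent \<Delta> d)\<^sup>*\<^sup>* F G"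
    if "F \<in> faces_dim \<Delta> d" for F G
    using is_d_path_rtranclp rtranclp_imp_is_d_path[OF _ that] by blast
  then show ?thesis unfolding d_path_connected_def by simp
qed

lemma rtranclp_map:
  assumes "R\<^sup>*\<^sup>* x y" and "\<And>a b. R a b \<Longrightarrow> S (f a) (f b)"
  shows "S\<^sup>*\<^sup>* (f x) (f y)"
  using assms(1) by induction (auto intro: rtranclp.rtrancl_into_rtrancl assms(2))

lemma generated_eq_Union_Pow: "generated \<G> = \<Union> (Pow ` \<G>)"
  by (auto simp: generated_def)

lemma simplicial_complex_generated:
  assumes "finite \<G>" and "\<And>G. G \<in> \<G> \<Longrightarrow> finite G"
  shows "simplicial_complex (generated \<G>)"
  using assms unfolding simplicial_complex_def generated_eq_Union_Pow
  by (auto intro: finite_subset)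

lemma faces_dim_generated:
  assumes "\<And>G. G \<in> \<G> \<Longrightarrow> finite G \<and> card G = n + 1"
  shows "faces_dim (generated \<G>) n = \<G>"
proof -
  have "S = G" if "S \<subseteq> G" "G \<in> \<G>" "card S = n + 1" for S G
    using assms[OF that(2)] that(1,3) card_subset_eq by metis
  then show ?thesis using assms by (auto simp: faces_dim_def generated_def)
qed

lemma facets_generated:
  assumes "\<And>G. G \<in> \<G> \<Longrightarrow> finite G \<and> card G = n"
  shows "facets (generated \<G>) = \<G>"
proof
  have antichain: "\<not> G \<subset> G'" if "G \<in> \<G>" "G' \<in> \<G>" for G G'
  proof
    assume "G \<subset> G'"
    then have "card G < card G'" using psubset_card_mono assms[OF that(2)] by blast
    then show False using assms[OF that(1)] assms[OF that(2)] by simp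
  qed
  show "facets (generated \<G>) \<subseteq> \<G>"
  proof
    fix S assume S: "S \<in> facets (generated \<G>)"
    then have "S \<in> generated \<G>" by (simp add: facets_def)
    then obtain G where "G \<in> \<G>" "S \<subseteq> G" by (auto simp: generated_def)
    moreover have "G \<in> generated \<G>" using \<open>G \<in> \<G>\<close> by (auto simp: generated_def)
    ultimately show "S \<in> \<G>" using S unfolding facets_def by blast
  qed
  show "\<G> \<subseteq> facets (generated \<G>)"
  proof
    fix G assume "G \<in> \<G>"
    have "\<not> G \<subset> T" if "T \<in> generated \<G>" for T
      using that antichain[OF \<open>G \<in> \<G>\<close>] by (auto simp: generated_def dest: psubset_subset_trans)
    moreover have "G \<in> generated \<G>" using \<open>G \<in> \<G>\<close> by (auto simp: generated_def)
    ultimately show "G \<in> facets (generated \<G>)" by (simp add: facets_def)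
  qed
qed

lemma pure_dim_generated:
  assumes "\<G> \<noteq> {}" and "\<And>G. G \<in> \<G> \<Longrightarrow> finite G \<and> card G = n + 1"
  shows "pure_dim (generated \<G>) n"
  using assms facets_generated[of \<G> "n + 1"] by (auto simp: pure_dim_def generated_def)

lemma faces_dim_nonempty_if_pure:
  assumes "simplicial_complex \<Delta>" and "pure_dim \<Delta> d"
  shows "faces_dim \<Delta> d \<noteq> {}"
proof -
  obtain S where "S \<in> \<Delta>" using assms(2) by (auto simp: pure_dim_def)
  then obtain F where "F \<in> \<Delta>" "\<forall>T\<in>\<Delta>. F \<subseteq> T \<longrightarrow> F = T"
    using finite_has_maximal2[of \<Delta> S] assms(1) by (auto simp: simplicial_complex_def)
  then have "F \<in> facets \<Delta>" by (auto simp: facets_def)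
  then show ?thesis using assms(2) by (auto simp: pure_dim_def faces_dim_def facets_def)
qed

lemma card_insert_Int_insert:
  assumes "finite F" and "v \<notin> F"
  shows "card (insert v F \<inter> insert v F') = Suc (card (F \<inter> F'))"
proof -
  have "insert v F \<inter> insert v F' = insert v (F \<inter> F')" by blast
  then show ?thesis using assms by simp
qed

lemma card_cone_cofaces_apex:
  assumes "v \<in> \<sigma>" and "\<And>F. F \<in> K \<Longrightarrow> v \<notin> F"
  shows "card {C \<in> insert v ` K. \<sigma> \<subseteq> C} = card {F \<in> K. \<sigma> - {v} \<subseteq> F}"
proof -
  have "{C \<in> insert v ` K. \<sigma> \<subseteq> C} = insert v ` {F \<in> K. \<sigma> - {v} \<subseteq> F}"
    using assms(1) by blast
  moreover have "inj_on (insert v) K"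
    using assms(2) by (metis inj_onI insert_ident)
  ultimately show ?thesis by (simp add: card_image inj_on_subset)
qed

lemma cone_cofaces_base:
  assumes "v \<notin> \<sigma>" and "finite \<sigma>" and "\<And>F. F \<in> K \<Longrightarrow> v \<notin> F \<and> finite F \<and> card F = card \<sigma>"
  shows "{C \<in> insert v ` K. \<sigma> \<subseteq> C} = insert v ` (K \<inter> {\<sigma>})"
proof -
  have "\<sigma> = F" if "F \<in> K" "\<sigma> \<subseteq> insert v F" for F
    using that assms card_subset_eq[of F \<sigma>] by (simp add: subset_insert)
  then show ?thesis by auto
qed

lemma Int_eq_common_facet:
  assumes "finite A" and "card A = Suc (card \<sigma>)" and "card A' = card A"
    and "\<sigma> \<subseteq> A" and "\<sigma> \<subseteq> A'" and "A \<noteq> A'"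
  shows "A \<inter> A' = \<sigma>"
proof -
  have "finite A'" using assms(2,3) card.infinite by fastforce
  have "A \<inter> A' \<noteq> A"
    using card_subset_eq[OF \<open>finite A'\<close>] assms(3,6) by (metis Int_absorb1 inf.cobounded2)
  then have "card (A \<inter> A') < card A"
    using assms(1) by (intro psubset_card_mono) auto
  moreover have "card \<sigma> \<le> card (A \<inter> A')"
    using assms(1,4,5) by (intro card_mono) auto
  ultimately have "card (A \<inter> A') = card \<sigma>" using assms(2) by simp
  then show ?thesis
    using assms(1,4,5) by (intro card_subset_eq[symmetric]) auto
qed

lemma bd_Z2_imp_cofacet:
  assumes "\<sigma> \<in> bd_Z2 \<A>"
  shows "\<exists>A\<in>\<A>. \<sigma> \<subseteq> A \<and> card A = Suc (card \<sigma>)"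
proof -
  have "{A \<in> \<A>. \<sigma> \<subseteq> A \<and> card A = Suc (card \<sigma>)} \<noteq> {}"
    using assms odd_card_imp_not_empty by (simp only: bd_Z2_def mem_Collect_eq)
  then show ?thesis by blast
qed

lemma bd_Z2_Un:
  assumes "\<And>\<sigma> B C. B \<in> \<B> \<Longrightarrow> C \<in> \<C> \<Longrightarrow> \<sigma> \<subseteq> B \<Longrightarrow> \<sigma> \<subseteq> C \<Longrightarrow>
      card B = Suc (card \<sigma>) \<Longrightarrow> card C = Suc (card \<sigma>) \<Longrightarrow> False"
  shows "bd_Z2 (\<B> \<union> \<C>) = bd_Z2 \<B> \<union> bd_Z2 \<C>"
proof (rule set_eqI)
  fix \<sigma>
  define cof where "cof \<X> = {A \<in> \<X>. \<sigma> \<subseteq> A \<and> card A = Suc (card \<sigma>)}" for \<X> :: "'a set set"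
  have "cof (\<B> \<union> \<C>) = cof \<B> \<union> cof \<C>" by (auto simp: cof_def)
  moreover have "cof \<B> = {} \<or> cof \<C> = {}" using assms by (auto simp: cof_def)
  moreover have "\<sigma> \<in> bd_Z2 \<X> \<longleftrightarrow> odd (card (cof \<X>))" for \<X>
    by (simp add: bd_Z2_def cof_def)
  ultimately show "\<sigma> \<in> bd_Z2 (\<B> \<union> \<C>) \<longleftrightarrow> \<sigma> \<in> bd_Z2 \<B> \<union> bd_Z2 \<C>"
    by auto
qed

locale cycle_filling =
  fixes \<Omega> :: "'a set set" and d :: nat and \<A> :: "'a set set" and v :: 'a
  assumes d_pos: "d \<ge> 1"
    and cycle: "is_cycle \<Omega> d"
    and finite_filling: "finite \<A>"
    and filling_card: "\<And>A. A \<in> \<A> \<Longrightarrow> finite A \<and> card A = d + 2"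
    and filling_boundary: "bd_Z2 \<A> = faces_dim \<Omega> d"
    and filling_minimal: "\<And>\<B>. \<B> \<subset> \<A> \<Longrightarrow> bd_Z2 \<B> \<noteq> faces_dim \<Omega> d"
    and apex_notin_cycle: "v \<notin> vertices \<Omega>"
    and apex_notin_filling: "\<And>A. A \<in> \<A> \<Longrightarrow> v \<notin> A"
begin

definition cone_facets :: "'a set set" where
  "cone_facets = insert v ` faces_dim \<Omega> d"

definition \<Phi>_facets :: "'a set set" where
  "\<Phi>_facets = cone_facets \<union> \<A>"

definition \<Phi> :: "'a set set" where
  "\<Phi> = generated \<Phi>_facets"

lemma cycle_face:
  assumes "F \<in> faces_dim \<Omega> d"
  shows "F \<in> \<Omega>" and "finite F" and "card F = d + 1" and "v \<notin> F"
  using assms cycle apex_notin_cycle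
  by (auto simp: faces_dim_def is_cycle_def simplicial_complex_def vertices_def)

lemma \<Phi>_facets_card: "G \<in> \<Phi>_facets \<Longrightarrow> finite G \<and> card G = d + 1 + 1"
  using cycle_face filling_card by (auto simp: \<Phi>_facets_def cone_facets_def)

lemma faces_dim_\<Phi>: "faces_dim \<Phi> (d + 1) = \<Phi>_facets"
  unfolding \<Phi>_def using \<Phi>_facets_card by (rule faces_dim_generated)

lemma simplicial_complex_\<Phi>: "simplicial_complex \<Phi>"
proof -
  have "finite (faces_dim \<Omega> d)"
    using cycle by (simp add: is_cycle_def simplicial_complex_def faces_dim_def)
  then show ?thesis
    unfolding \<Phi>_def using finite_filling \<Phi>_facets_card
    by (intro simplicial_complex_generated) (auto simp: \<Phi>_facets_def cone_facets_def)
qed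

lemma cone_facets_nonempty: "cone_facets \<noteq> {}"
proof -
  have "faces_dim \<Omega> d \<noteq> {}"
    using faces_dim_nonempty_if_pure cycle unfolding is_cycle_def by blast
  then show ?thesis by (simp add: cone_facets_def)
qed

lemma pure_dim_\<Phi>: "pure_dim \<Phi> (d + 1)"
  unfolding \<Phi>_def using cone_facets_nonempty \<Phi>_facets_card
  by (intro pure_dim_generated) (auto simp: \<Phi>_facets_def)

lemma adjacent_\<Phi>_iff:
  "d_adjacent \<Phi> (d + 1) G G' \<longleftrightarrow> G \<in> \<Phi>_facets \<and> G' \<in> \<Phi>_facets \<and> card (G \<inter> G') = d + 1"
  unfolding d_adjacent_def faces_dim_\<Phi> ..

lemma cone_facets_connected:
  assumes "C \<in> cone_facets" and "C' \<in> cone_facets"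
  shows "(d_adjacent \<Phi> (d + 1))\<^sup>*\<^sup>* C C'"
proof -
  obtain F F' where F: "F \<in> faces_dim \<Omega> d" "C = insert v F"
    and F': "F' \<in> faces_dim \<Omega> d" "C' = insert v F'"
    using assms by (auto simp: cone_facets_def)
  have "(d_adjacent \<Omega> d)\<^sup>*\<^sup>* F F'"
    using cycle F(1) F'(1) by (simp add: is_cycle_def d_path_connected_iff)
  moreover have "d_adjacent \<Phi> (d + 1) (insert v H) (insert v H')" if "d_adjacent \<Omega> d H H'" for H H'
  proof -
    have H: "H \<in> faces_dim \<Omega> d" "H' \<in> faces_dim \<Omega> d" "card (H \<inter> H') = d"
      using that by (simp_all add: d_adjacent_def)
    then have "card (insert v H \<inter> insert v H') = d + 1"
      using card_insert_Int_insert cycle_face(2,4) by simp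
    with H show ?thesis
      unfolding adjacent_\<Phi>_iff by (simp add: \<Phi>_facets_def cone_facets_def)
  qed
  ultimately show ?thesis using F(2) F'(2) by (simp add: rtranclp_map)
qed

lemma filling_reachable:
  assumes "C \<in> cone_facets" and "A \<in> \<A>"
  shows "(d_adjacent \<Phi> (d + 1))\<^sup>*\<^sup>* C A"
proof -
  let ?reach = "(d_adjacent \<Phi> (d + 1))\<^sup>*\<^sup>* C"
  define \<B> where "\<B> = {A \<in> \<A>. \<not> ?reach A}"
  have reach_step: "?reach B" if "?reach X" "d_adjacent \<Phi> (d + 1) X B" for X B
    using that by (rule rtranclp.rtrancl_into_rtrancl)
  have separated: False
    if "B \<in> \<B>" "B' \<in> \<A> - \<B>" "\<sigma> \<subseteq> B" "\<sigma> \<subseteq> B'"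
       "card B = Suc (card \<sigma>)" "card B' = Suc (card \<sigma>)" for B B' \<sigma>
  proof -
    have "B' \<inter> B = \<sigma>"
      using that filling_card by (intro Int_eq_common_facet) (auto simp: \<B>_def)
    moreover have "card \<sigma> = d + 1"
      using that filling_card by (auto simp: \<B>_def)
    ultimately have "d_adjacent \<Phi> (d + 1) B' B"
      using that unfolding adjacent_\<Phi>_iff by (simp add: \<Phi>_facets_def \<B>_def)
    then show False using that reach_step by (auto simp: \<B>_def)
  qed
  have off_cycle: "\<sigma> \<notin> faces_dim \<Omega> d" if "B \<in> \<B>" "\<sigma> \<subseteq> B" "card B = Suc (card \<sigma>)" for B \<sigma>
  proof
    assume \<sigma>: "\<sigma> \<in> faces_dim \<Omega> d"
    then have "insert v \<sigma> \<inter> B = \<sigma>"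
      using that apex_notin_filling by (auto simp: \<B>_def)
    then have "card (insert v \<sigma> \<inter> B) = d + 1"
      using cycle_face(3)[OF \<sigma>] by simp
    moreover have "insert v \<sigma> \<in> \<Phi>_facets" and "B \<in> \<Phi>_facets"
      using \<sigma> \<open>B \<in> \<B>\<close> by (auto simp: \<Phi>_facets_def cone_facets_def \<B>_def)
    ultimately have "d_adjacent \<Phi> (d + 1) (insert v \<sigma>) B"
      unfolding adjacent_\<Phi>_iff by blast
    moreover have "?reach (insert v \<sigma>)"
      using \<sigma> assms(1) cone_facets_connected by (simp add: cone_facets_def)
    ultimately show False using that reach_step by (auto simp: \<B>_def)
  qed
  have "bd_Z2 (\<B> \<union> (\<A> - \<B>)) = bd_Z2 \<B> \<union> bd_Z2 (\<A> - \<B>)"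
    by (rule bd_Z2_Un, rule separated)
  moreover have "\<B> \<union> (\<A> - \<B>) = \<A>" by (auto simp: \<B>_def)
  moreover have "\<sigma> \<notin> faces_dim \<Omega> d" if "\<sigma> \<in> bd_Z2 \<B>" for \<sigma>
    using bd_Z2_imp_cofacet[OF that] off_cycle by blast
  ultimately have "bd_Z2 (\<A> - \<B>) = faces_dim \<Omega> d"
    using filling_boundary by auto
  then have "\<B> = {}"
    using filling_minimal[of "\<A> - \<B>"] by (auto simp: \<B>_def)
  then show ?thesis using assms(2) by (auto simp: \<B>_def)
qed

lemma d_path_connected_\<Phi>: "d_path_connected \<Phi> (d + 1)"
proof -
  obtain C where C: "C \<in> cone_facets" using cone_facets_nonempty by blast
  have "(d_adjacent \<Phi> (d + 1))\<^sup>*\<^sup>* C G" if "G \<in> \<Phi>_facets" for G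
    using that C cone_facets_connected filling_reachable by (auto simp: \<Phi>_facets_def)
  then have "(d_adjacent \<Phi> (d + 1))\<^sup>*\<^sup>* G G'" if "G \<in> \<Phi>_facets" "G' \<in> \<Phi>_facets" for G G'
    using that symp_d_adjacent by (metis rtranclp_trans symp_rtranclp sympD)
  then show ?thesis
    unfolding d_path_connected_iff faces_dim_\<Phi> using pure_dim_\<Phi> by blast
qed

lemma face_of_\<Phi>:
  assumes "\<sigma> \<in> faces_dim \<Phi> d"
  obtains G where "G \<in> \<Phi>_facets" "\<sigma> \<subseteq> G" "finite \<sigma>" "card \<sigma> = d + 1"
proof -
  obtain G where G: "G \<in> \<Phi>_facets" "\<sigma> \<subseteq> G"
    using assms by (auto simp: faces_dim_def \<Phi>_def generated_def)
  moreover have "finite \<sigma>" using G \<Phi>_facets_card finite_subset by blast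
  ultimately show ?thesis using assms that by (simp add: faces_dim_def)
qed

lemma apex_link_face:
  assumes "\<sigma> \<in> faces_dim \<Phi> d" and "v \<in> \<sigma>"
  shows "\<sigma> - {v} \<in> faces_dim \<Omega> (d - 1)"
proof -
  obtain G where G: "G \<in> \<Phi>_facets" "\<sigma> \<subseteq> G" and \<sigma>: "finite \<sigma>" "card \<sigma> = d + 1"
    using assms(1) by (rule face_of_\<Phi>)
  then have "G \<in> cone_facets" using assms(2) apex_notin_filling by (auto simp: \<Phi>_facets_def)
  then obtain F where F: "F \<in> faces_dim \<Omega> d" "G = insert v F" by (auto simp: cone_facets_def)
  have "\<sigma> - {v} \<subseteq> F" using G(2) F(2) by blast
  then have "\<sigma> - {v} \<in> \<Omega>"
    using cycle cycle_face(1)[OF F(1)] by (auto simp: is_cycle_def simplicial_complex_def)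
  moreover have "card (\<sigma> - {v}) = d - 1 + 1" using \<sigma> assms(2) d_pos by simp
  ultimately show ?thesis by (simp add: faces_dim_def)
qed

lemma even_cofaces_\<Phi>:
  assumes "\<sigma> \<in> faces_dim \<Phi> d"
  shows "even (card {G \<in> faces_dim \<Phi> (d + 1). \<sigma> \<subseteq> G})"
proof -
  obtain \<sigma>: "finite \<sigma>" "card \<sigma> = d + 1"
    using assms by (rule face_of_\<Phi>)
  have "finite cone_facets"
    using cycle by (simp add: cone_facets_def is_cycle_def simplicial_complex_def faces_dim_def)
  moreover have "{G \<in> faces_dim \<Phi> (d + 1). \<sigma> \<subseteq> G} = {C \<in> cone_facets. \<sigma> \<subseteq> C} \<union> {A \<in> \<A>. \<sigma> \<subseteq> A}"
    unfolding faces_dim_\<Phi> \<Phi>_facets_def by blast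
  moreover have "{C \<in> cone_facets. \<sigma> \<subseteq> C} \<inter> {A \<in> \<A>. \<sigma> \<subseteq> A} = {}"
    using apex_notin_filling by (auto simp: cone_facets_def)
  ultimately have count: "card {G \<in> faces_dim \<Phi> (d + 1). \<sigma> \<subseteq> G} =
      card {C \<in> cone_facets. \<sigma> \<subseteq> C} + card {A \<in> \<A>. \<sigma> \<subseteq> A}"
    using finite_filling by (simp add: card_Un_disjoint)
  show ?thesis
  proof (cases "v \<in> \<sigma>")
    case True
    then have no_filling: "{A \<in> \<A>. \<sigma> \<subseteq> A} = {}" using apex_notin_filling by blast
    have cones: "card {C \<in> cone_facets. \<sigma> \<subseteq> C} = card {F \<in> faces_dim \<Omega> d. \<sigma> - {v} \<subseteq> F}"
      unfolding cone_facets_def using True cycle_face(4) by (rule card_cone_cofaces_apex)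
    have "even (card {F \<in> faces_dim \<Omega> d. \<sigma> - {v} \<subseteq> F})"
      using cycle apex_link_face[OF assms True] by (simp add: is_cycle_def)
    then show ?thesis unfolding count no_filling cones by simp
  next
    case False
    have cones: "{C \<in> cone_facets. \<sigma> \<subseteq> C} = insert v ` (faces_dim \<Omega> d \<inter> {\<sigma>})"
      unfolding cone_facets_def using False \<sigma>(1) cycle_face(2-4) \<sigma>(2)
      by (intro cone_cofaces_base) auto
    have fillings: "{A \<in> \<A>. \<sigma> \<subseteq> A} = {A \<in> \<A>. \<sigma> \<subseteq> A \<and> card A = Suc (card \<sigma>)}"
      using filling_card \<sigma>(2) by auto
    have "odd (card {A \<in> \<A>. \<sigma> \<subseteq> A \<and> card A = Suc (card \<sigma>)}) \<longleftrightarrow> \<sigma> \<in> faces_dim \<Omega> d"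
      using filling_boundary by (auto simp: bd_Z2_def)
    then show ?thesis
      unfolding count cones fillings by (cases "\<sigma> \<in> faces_dim \<Omega> d") auto
  qed
qed

lemma is_cycle_\<Phi>: "is_cycle \<Phi> (d + 1)"
  unfolding is_cycle_def
  using simplicial_complex_\<Phi> pure_dim_\<Phi> d_path_connected_\<Phi> even_cofaces_\<Phi> by simp

end

theorem mainTheorem4:
  fixes \<Delta> \<Omega> \<A> :: "'a set set" and d :: nat and v :: 'a
  assumes "d \<ge> 1"
    and "simplicial_complex \<Delta>"
    and "\<Omega> \<subseteq> \<Delta>"
    and "is_cycle \<Omega> d"
    and "\<A> \<subseteq> faces_dim (induced \<Delta> (vertices \<Omega>)) (d + 1)"
    and "bd_Z2 \<A> = faces_dim \<Omega> d"
    and "\<forall>\<B>. \<B> \<subset> \<A> \<longrightarrow> bd_Z2 \<B> \<noteq> faces_dim \<Omega> d"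
    and "v \<in> vertices \<Delta>"
    and "v \<notin> vertices \<Omega>"
  shows "is_cycle (generated ((\<lambda>F. insert v F) ` faces_dim \<Omega> d \<union> \<A>)) (d + 1)"
proof -
  have filling: "A \<in> \<Delta> \<and> card A = d + 2 \<and> A \<subseteq> vertices \<Omega>" if "A \<in> \<A>" for A
    using assms(5) that by (auto simp: faces_dim_def induced_def)
  interpret cycle_filling \<Omega> d \<A> v
  proof
    show "finite \<A>"
      using assms(2) filling by (meson finite_subset simplicial_complex_def subsetI)
    show "finite A \<and> card A = d + 2" if "A \<in> \<A>" for A
      using filling[OF that] card.infinite by fastforce
    show "v \<notin> A" if "A \<in> \<A>" for A
      using filling[OF that] assms(9) by blast
  qed (use assms in auto)
  show ?thesis
    using is_cycle_\<Phi> unfolding \<Phi>_def \<Phi>_facets_def cone_facets_def .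
qed

end
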